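(* Let $A$ be a finite alphabet and $L\subseteq A^*$. If $L\subseteq\bigcup_iP_i\subseteq{\downarrow}L$ for a family $(P_i)_i$ of D-products of length at most $\ell$, then $h({\downarrow}L)\leq\ell+1$ and $h({\downarrow}_<L)\leq\ell+1$.
   Context: A D-product is a regular expression $E_1E_2\cdots E_\ell$ where each $E_i$ is either $B^*$ for some subalphabet $B\subseteq A$ or a single letter $a\in A$; $\ell$ is its length, and it also denotes its language. $u\sqsubseteq v$ (subword) means $u=a_1\cdots a_n$ with letters $a_i$ and $v=v_0a_1v_1\cdots a_nv_n$; $u\sqsubset v$ means $u\sqsubseteq v$, $u\ne v$. ${\downarrow}L=\{v~|~\exists u\in L: v\sqsubseteq u\}$, ${\downarrow}_<L=\{v~|~\exists u\in L:v\sqsubset u\}$. $u\sim_n v$ iff $u,v$ have the same subwords of length at most $n$; $L$ is $n$-PT if it is a union of $\sim_n$-classes, and $h(L)$ is the least such $n$. *)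

theory Defs
  imports Main "HOL-Library.Sublist"
begin

text \<open>Words over the alphabet are lists over a finite type 'a (the alphabet A = UNIV).
  Subword order: the library's scattered subsequence relation subseq.\<close>

datatype 'a ditem = Star "'a set" | Letter 'a

type_synonym 'a dprod = "'a ditem list"

fun dlang :: "'a dprod \<Rightarrow> 'a list set" where
  "dlang [] = {[]}"
| "dlang (Star B # p) = {u @ v | u v. set u \<subseteq> B \<and> v \<in> dlang p}"
| "dlang (Letter a # p) = {a # v | v. v \<in> dlang p}"

definition down :: "'a list set \<Rightarrow> 'a list set" where
  "down L = {v. \<exists>u\<in>L. subseq v u}"

definition down_strict :: "'a list set \<Rightarrow> 'a list set" where
  "down_strict L = {v. \<exists>u\<in>L. strict_subseq v u}"

definition simon_eq :: "nat \<Rightarrow> 'a list \<Rightarrow> 'a list \<Rightarrow> bool" where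
  "simon_eq n u v \<longleftrightarrow>
     {w. subseq w u \<and> length w \<le> n} = {w. subseq w v \<and> length w \<le> n}"

definition is_nPT :: "nat \<Rightarrow> 'a list set \<Rightarrow> bool" where
  "is_nPT n L \<longleftrightarrow> (\<forall>u v. simon_eq n u v \<longrightarrow> (u \<in> L \<longleftrightarrow> v \<in> L))"

definition pt_height :: "'a list set \<Rightarrow> nat" where
  "pt_height L = (LEAST n. is_nPT n L)"

end

theory Submission
  imports Defs
begin

text \<open>
  If a word u is not a subword of any word of a D-product p, this is already witnessed by a
  subword of u of length at most |p| + 1: read u greedily against p (at a factor B* skip the
  longest prefix over B, at a factor a skip a leading a); each factor spends at most one letter
  of the witness and the final mismatch one more. Hence the downward closure of p is
  (|p| + 1)-PT. So is its strict downward closure: Simon-equivalent words are equal or both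
  longer than p, and a word of p longer than p has a nonempty star factor, so pumping it shows
  that the word is a proper subword of another word of p. Finally, a union of D-products
  sandwiched between L and its downward closure has the same (strict) downward closure as L.
\<close>

lemma down_mono_subseq: "u \<in> down X \<Longrightarrow> subseq v u \<Longrightarrow> v \<in> down X"
  unfolding down_def using subseq_order.trans by blast

lemma down_UN: "down (\<Union>i\<in>I. L i) = (\<Union>i\<in>I. down (L i))"
  unfolding down_def by blast

lemma down_strict_UN: "down_strict (\<Union>i\<in>I. L i) = (\<Union>i\<in>I. down_strict (L i))"
  unfolding down_strict_def by blast

lemma down_eq_if_between:
  assumes "L \<subseteq> M" "M \<subseteq> down L"
  shows "down M = down L"
  using assms unfolding down_def using subseq_order.trans by blast

lemma down_strict_eq_if_between:
  assumes "L \<subseteq> M" "M \<subseteq> down L"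
  shows "down_strict M = down_strict L"
  using assms unfolding down_def down_strict_def using subseq_order.less_le_trans by blast

lemma append_in_dlang_Star: "set u \<subseteq> B \<Longrightarrow> v \<in> dlang p \<Longrightarrow> u @ v \<in> dlang (Star B # p)"
  by auto

lemma dlang_nonempty: "\<exists>w. w \<in> dlang p"
proof (induction p)
  case Nil
  then show ?case by auto
next
  case (Cons x p)
  then obtain w where w: "w \<in> dlang p" by auto
  show ?case
  proof (cases x)
    case (Star B)
    have "[] @ w \<in> dlang (Star B # p)" using w by (intro append_in_dlang_Star) auto
    then show ?thesis using Star by blast
  next
    case (Letter a)
    have "a # w \<in> dlang (Letter a # p)" using w by auto
    then show ?thesis using Letter by blast
  qed
qed

lemma Nil_in_down_dlang: "[] \<in> down (dlang p)"
  using dlang_nonempty[of p] unfolding down_def by auto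

lemma in_down_dlang_Nil_iff: "u \<in> down (dlang []) \<longleftrightarrow> u = []"
  unfolding down_def by auto

lemma subseq_append_imp_subseq_dropWhile:
  assumes "subseq u (x @ v)" "\<forall>y\<in>set x. P y"
  shows "subseq (dropWhile P u) v"
  using assms
proof (induction x arbitrary: u)
  case Nil
  have "subseq (dropWhile P u) u" by (rule suffix_imp_subseq[OF suffix_dropWhile])
  then show ?case using Nil subseq_order.trans by auto
next
  case (Cons b x)
  show ?case
  proof (cases u)
    case Nil
    then show ?thesis by simp
  next
    case (Cons c u')
    show ?thesis
    proof (cases "c = b")
      case True
      with Cons.prems \<open>u = c # u'\<close> have "subseq u' (x @ v)" "P c" by auto
      then show ?thesis using Cons.IH Cons.prems \<open>u = c # u'\<close> by auto
    next
      case False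
      with Cons.prems \<open>u = c # u'\<close> have "subseq u (x @ v)" by auto
      then show ?thesis using Cons.IH Cons.prems by auto
    qed
  qed
qed

lemma in_down_dlang_Star_iff:
  "u \<in> down (dlang (Star B # p)) \<longleftrightarrow> dropWhile (\<lambda>x. x \<in> B) u \<in> down (dlang p)"
proof
  assume "u \<in> down (dlang (Star B # p))"
  then obtain x v where "subseq u (x @ v)" "set x \<subseteq> B" "v \<in> dlang p"
    unfolding down_def by auto
  then show "dropWhile (\<lambda>x. x \<in> B) u \<in> down (dlang p)"
    unfolding down_def by (auto intro: subseq_append_imp_subseq_dropWhile)
next
  assume "dropWhile (\<lambda>x. x \<in> B) u \<in> down (dlang p)"
  then obtain v where v: "v \<in> dlang p" "subseq (dropWhile (\<lambda>x. x \<in> B) u) v"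
    unfolding down_def by auto
  have "set (takeWhile (\<lambda>x. x \<in> B) u) \<subseteq> B"
    by (auto dest: set_takeWhileD)
  then have "takeWhile (\<lambda>x. x \<in> B) u @ v \<in> dlang (Star B # p)"
    using v by (intro append_in_dlang_Star)
  moreover have "subseq u (takeWhile (\<lambda>x. x \<in> B) u @ v)"
    using v(2) by (metis subseq_append' takeWhile_dropWhile_id)
  ultimately show "u \<in> down (dlang (Star B # p))" unfolding down_def by auto
qed

lemma Cons_in_down_dlang_Letter_iff:
  "a # u \<in> down (dlang (Letter a # p)) \<longleftrightarrow> u \<in> down (dlang p)"
  unfolding down_def by force

lemma Cons_in_down_dlang_Letter_iff_other:
  assumes "c \<noteq> a"
  shows "c # u \<in> down (dlang (Letter a # p)) \<longleftrightarrow> c # u \<in> down (dlang p)"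
  using assms unfolding down_def by force

lemma subseq_Cons_witness_notin_down:
  assumes "subseq m (c # y)" "m \<notin> down X"
  obtains m' where "subseq (c # m') (c # y)" "length m' \<le> length m" "c # m' \<notin> down X"
proof (cases "subseq m y")
  case True
  moreover have "c # m \<notin> down X" using assms(2) down_mono_subseq[of "c # m" X m] by auto
  ultimately show ?thesis by (intro that[of m]) auto
next
  case False
  then obtain m0 where "m = c # m0" "subseq m0 y"
    using assms(1) by (cases m) (auto split: if_splits)
  then show ?thesis using assms(2) by (intro that[of m0]) auto
qed

lemma short_subseq_notin_down_dlang:
  assumes "u \<notin> down (dlang p)"
  shows "\<exists>m. subseq m u \<and> length m \<le> length p + 1 \<and> m \<notin> down (dlang p)"
  using assms
proof (induction p arbitrary: u)
  case Nil
  then obtain c u' where "u = c # u'" using in_down_dlang_Nil_iff by (cases u) auto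
  then show ?case using in_down_dlang_Nil_iff by (intro exI[of _ "[c]"]) auto
next
  case (Cons it p)
  show ?case
  proof (cases it)
    case (Star B)
    let ?y = "dropWhile (\<lambda>x. x \<in> B) u"
    have y: "?y \<notin> down (dlang p)" using Cons.prems Star in_down_dlang_Star_iff by blast
    then obtain c y' where cy: "?y = c # y'" using Nil_in_down_dlang by (cases ?y) auto
    have "c \<notin> B" using cy by (metis dropWhile_eq_Cons_conv)
    obtain m where m: "subseq m ?y" "length m \<le> length p + 1" "m \<notin> down (dlang p)"
      using Cons.IH y by blast
    then obtain m' where m': "subseq (c # m') ?y" "length m' \<le> length m"
      "c # m' \<notin> down (dlang p)"
      using cy subseq_Cons_witness_notin_down by metis
    then have "c # m' \<notin> down (dlang (Star B # p))"
      using \<open>c \<notin> B\<close> in_down_dlang_Star_iff[of "c # m'" B p] by simp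
    moreover have "subseq (c # m') u"
      using m'(1) suffix_imp_subseq[OF suffix_dropWhile] subseq_order.trans by blast
    ultimately show ?thesis using m(2) m'(2) Star by (intro exI[of _ "c # m'"]) auto
  next
    case (Letter a)
    obtain c u' where u: "u = c # u'"
      using Cons.prems Nil_in_down_dlang[of "it # p"] by (metis neq_Nil_conv)
    show ?thesis
    proof (cases "c = a")
      case True
      then have "u' \<notin> down (dlang p)"
        using Cons.prems by (simp add: u Letter Cons_in_down_dlang_Letter_iff del: dlang.simps)
      then obtain m where m: "subseq m u'" "length m \<le> length p + 1" "m \<notin> down (dlang p)"
        using Cons.IH by blast
      moreover have "a # m \<notin> down (dlang (Letter a # p))"
        using m(3) by (simp add: Cons_in_down_dlang_Letter_iff del: dlang.simps)
      ultimately show ?thesis using True u Letter by (intro exI[of _ "a # m"]) auto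
    next
      case False
      then have "u \<notin> down (dlang p)"
        using Cons.prems by (simp add: u Letter Cons_in_down_dlang_Letter_iff_other del: dlang.simps)
      then obtain m where m: "subseq m u" "length m \<le> length p + 1" "m \<notin> down (dlang p)"
        using Cons.IH by blast
      then obtain m' where m': "subseq (c # m') u" "length m' \<le> length m"
        "c # m' \<notin> down (dlang p)"
        using u subseq_Cons_witness_notin_down by metis
      then have "c # m' \<notin> down (dlang (Letter a # p))"
        using False by (simp add: Cons_in_down_dlang_Letter_iff_other del: dlang.simps)
      then show ?thesis using m(2) m'(1,2) Letter by (intro exI[of _ "c # m'"]) auto
    qed
  qed
qed

lemma dlang_pump:
  assumes "w \<in> dlang p" "length p < length w"
  shows "\<exists>w'\<in>dlang p. strict_subseq w w'"
  using assms
proof (induction p arbitrary: w)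
  case Nil
  then show ?case by auto
next
  case (Cons it p)
  show ?case
  proof (cases it)
    case (Star B)
    then obtain x v where w: "w = x @ v" "set x \<subseteq> B" "v \<in> dlang p" using Cons.prems by auto
    show ?thesis
    proof (cases x)
      case Nil
      have "length p < length v" using Cons.prems w Nil Star by simp
      then obtain v' where "v' \<in> dlang p" "strict_subseq v v'" using Cons.IH w by blast
      moreover have "[] @ v' \<in> dlang (Star B # p)" using calculation by (intro append_in_dlang_Star) auto
      ultimately show ?thesis using w Nil Star by (metis append_Nil)
    next
      case (Cons b x')
      have "(b # x) @ v \<in> dlang (Star B # p)" using w Cons by (intro append_in_dlang_Star) auto
      moreover have "strict_subseq w ((b # x) @ v)"
        unfolding strict_subseq_def using w by auto
      ultimately show ?thesis using Star by blast
    qed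
  next
    case (Letter a)
    then obtain v where w: "w = a # v" "v \<in> dlang p" using Cons.prems by auto
    then obtain v' where "v' \<in> dlang p" "strict_subseq v v'" using Cons by auto
    then show ?thesis using w Letter unfolding strict_subseq_def by force
  qed
qed

lemma long_in_down_strict_dlang_iff:
  assumes "length p < length v"
  shows "v \<in> down_strict (dlang p) \<longleftrightarrow> v \<in> down (dlang p)"
proof
  assume "v \<in> down (dlang p)"
  then obtain w where w: "w \<in> dlang p" "subseq v w" unfolding down_def by auto
  show "v \<in> down_strict (dlang p)"
  proof (cases "v = w")
    case True
    then show ?thesis using dlang_pump w assms unfolding down_strict_def by blast
  next
    case False
    then show ?thesis using w unfolding down_strict_def strict_subseq_def by auto
  qed
qed (auto simp: down_def down_strict_def strict_subseq_def)

lemma simon_eq_sym: "simon_eq n u v \<Longrightarrow> simon_eq n v u"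
  unfolding simon_eq_def by auto

lemma simon_eq_subseq: "simon_eq n u v \<Longrightarrow> subseq m u \<Longrightarrow> length m \<le> n \<Longrightarrow> subseq m v"
  unfolding simon_eq_def by blast

lemma simon_eq_short_imp_eq:
  assumes "simon_eq n u v" "length u < n"
  shows "u = v"
proof -
  have uv: "subseq u v" using simon_eq_subseq[OF assms(1)] assms(2) by auto
  have "length v \<le> length u"
  proof (rule ccontr)
    let ?w = "take (length u + 1) v"
    assume "\<not> length v \<le> length u"
    then have len: "length ?w = length u + 1" by auto
    have "subseq ?w v" by (rule prefix_imp_subseq) (metis take_is_prefix)
    moreover have "length ?w \<le> n" using len assms(2) by linarith
    ultimately have "subseq ?w u" using simon_eq_subseq[OF simon_eq_sym[OF assms(1)]] by blast
    then show False using list_emb_length len by fastforce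
  qed
  then show ?thesis using uv subseq_same_length list_emb_length le_antisym by metis
qed

lemma is_nPT_if_one_direction:
  assumes "\<And>u v. simon_eq n u v \<Longrightarrow> v \<in> L \<Longrightarrow> u \<in> L"
  shows "is_nPT n L"
  unfolding is_nPT_def using assms simon_eq_sym by blast

lemma is_nPT_UN: "(\<And>i. i \<in> I \<Longrightarrow> is_nPT n (L i)) \<Longrightarrow> is_nPT n (\<Union>i\<in>I. L i)"
  unfolding is_nPT_def by blast

lemma pt_height_le: "is_nPT n L \<Longrightarrow> pt_height L \<le> n"
  unfolding pt_height_def by (rule Least_le)

lemma is_nPT_down_dlang:
  assumes "length p < n"
  shows "is_nPT n (down (dlang p))"
proof (rule is_nPT_if_one_direction)
  fix u v
  assume uv: "simon_eq n u v" and v: "v \<in> down (dlang p)"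
  show "u \<in> down (dlang p)"
  proof (rule ccontr)
    assume "u \<notin> down (dlang p)"
    then obtain m where m: "subseq m u" "length m \<le> length p + 1" "m \<notin> down (dlang p)"
      using short_subseq_notin_down_dlang by blast
    then have "subseq m v" using simon_eq_subseq[OF uv] assms by auto
    then show False using m(3) v down_mono_subseq by blast
  qed
qed

lemma is_nPT_down_strict_dlang:
  assumes "length p < n"
  shows "is_nPT n (down_strict (dlang p))"
proof (rule is_nPT_if_one_direction)
  fix u v
  assume uv: "simon_eq n u v" and v: "v \<in> down_strict (dlang p)"
  show "u \<in> down_strict (dlang p)"
  proof (cases "length u < n \<or> length v < n")
    case True
    then have "u = v" using uv simon_eq_short_imp_eq simon_eq_sym by blast
    then show ?thesis using v by simp
  next
    case False
    then have long: "length p < length u" "length p < length v" using assms by auto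
    then have "v \<in> down (dlang p)" using v long_in_down_strict_dlang_iff by blast
    then have "u \<in> down (dlang p)" using is_nPT_down_dlang[OF assms] uv unfolding is_nPT_def by blast
    then show ?thesis using long long_in_down_strict_dlang_iff by blast
  qed
qed

theorem corollary13:
  fixes L :: "('a::finite) list set" and P :: "'a dprod set" and l :: nat
  assumes "\<forall>p\<in>P. length p \<le> l"
    and "L \<subseteq> (\<Union>p\<in>P. dlang p)"
    and "(\<Union>p\<in>P. dlang p) \<subseteq> down L"
  shows "(\<exists>n. is_nPT n (down L)) \<and> pt_height (down L) \<le> l + 1
       \<and> (\<exists>n. is_nPT n (down_strict L)) \<and> pt_height (down_strict L) \<le> l + 1"
proof -
  have short: "length p < l + 1" if "p \<in> P" for p
    using assms(1) that by auto
  have "is_nPT (l + 1) (\<Union>p\<in>P. down (dlang p))"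
    by (rule is_nPT_UN) (rule is_nPT_down_dlang[OF short])
  moreover have "down L = (\<Union>p\<in>P. down (dlang p))"
    unfolding down_eq_if_between[OF assms(2,3), symmetric] by (rule down_UN)
  moreover have "is_nPT (l + 1) (\<Union>p\<in>P. down_strict (dlang p))"
    by (rule is_nPT_UN) (rule is_nPT_down_strict_dlang[OF short])
  moreover have "down_strict L = (\<Union>p\<in>P. down_strict (dlang p))"
    unfolding down_strict_eq_if_between[OF assms(2,3), symmetric] by (rule down_strict_UN)
  ultimately show ?thesis using pt_height_le by auto
qed

end
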